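(* For $\Re(s)>1$, $$\zeta\big(\mathbb{Z}[X]/(X^2),s\big)=\zeta(s)\,\zeta(2s-1),$$ where $\zeta$ is the Riemann zeta function; in particular this function has a double pole at $s=1$.
   Context: For a commutative ring $R$ with identity in which the number $a_n(R)$ of ideals of index $n$ is finite for every $n\in\mathbb{N}$, $\zeta(R,s)=\sum_{n\ge1}a_n(R)n^{-s}$. *)

theory Defs
  imports "HOL-Analysis.Analysis" "HOL-Algebra.QuotRing"
begin

text \<open>The ring Z[X]/(X^2), realised concretely as pairs (a,b) standing for the
  residue class of a + b X; multiplication uses X^2 = 0.\<close>
definition ZX_mod_X2 :: "(int \<times> int) ring" where
  "ZX_mod_X2 = \<lparr> carrier = UNIV,
     monoid.mult = (\<lambda>(a, b) (c, d). (a * c, a * d + b * c)),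
     one = (1, 0),
     zero = (0, 0),
     add = (\<lambda>(a, b) (c, d). (a + c, b + d)) \<rparr>"

definition num_ideals_of_index :: "('a, 'b) ring_scheme \<Rightarrow> nat \<Rightarrow> nat" where
  "num_ideals_of_index R n = card {I. ideal I R \<and> card (carrier (R Quot I)) = n}"

definition riemann_zeta :: "complex \<Rightarrow> complex" where
  "riemann_zeta s = (\<Sum>n. 1 / (of_nat (Suc n)) powr s)"

end

theory Submission
  imports Defs
begin

text \<open>
  Write \<open>a + bX\<close> as the pair \<open>(a, b)\<close>. An ideal \<open>I\<close> of finite index contains a nonzero
  integer; hence its first coordinates form a group \<open>m\<int>\<close>, its elements \<open>(0, b)\<close> form a group
  \<open>k\<int>\<close> with \<open>k\<close> dividing \<open>m = jk\<close>, and reducing the second coordinate of some \<open>(m, b)\<close> in \<open>I\<close>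
  modulo \<open>k\<close> gives \<open>I = \<int>(jk, t) + \<int>(0, k)\<close> with \<open>0 \<le> t < k\<close>. This ideal has index \<open>jk\<^sup>2\<close>
  and the triple \<open>(k, j, t)\<close> is determined by it, so the number of ideals of index \<open>n\<close> is the sum
  of \<open>k\<close> over all factorisations \<open>n = jk\<^sup>2\<close>: the \<open>n\<close>-th Dirichlet coefficient of
  \<open>\<zeta>(2s - 1) \<zeta>(s) = (\<Sum>k. k \<cdot> k\<^sup>-\<^sup>2\<^sup>s) (\<Sum>j. j\<^sup>-\<^sup>s)\<close>.
  The double pole at \<open>s = 1\<close> comes from \<open>(s - 1) \<zeta>(s) \<rightarrow> 1\<close>, which holds because
  \<open>(s - 1) n\<^sup>-\<^sup>s\<close> differs from the telescoping term \<open>n\<^sup>1\<^sup>-\<^sup>s - (n + 1)\<^sup>1\<^sup>-\<^sup>s\<close> by \<open>O(|s - 1| |s| n\<^sup>-\<^sup>2)\<close>.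
\<close>

lemma ideal_a_rcos_eq_iff:
  assumes "ideal I R" "x \<in> carrier R" "y \<in> carrier R"
  shows "I +>\<^bsub>R\<^esub> x = I +>\<^bsub>R\<^esub> y \<longleftrightarrow> x \<ominus>\<^bsub>R\<^esub> y \<in> I"
proof -
  interpret ideal I R by fact
  have "I +>\<^bsub>R\<^esub> x = I +>\<^bsub>R\<^esub> y \<longleftrightarrow> x \<in> I +>\<^bsub>R\<^esub> y"
    using a_repr_independence' a_repr_independenceD assms(2,3) by metis
  also have "\<dots> \<longleftrightarrow> x \<ominus>\<^bsub>R\<^esub> y \<in> I"
    by (rule a_rcos_module_minus[OF ring_axioms assms(3,2)])
  finally show ?thesis .
qed

lemma ideal_bij_betw_transversal_quotient:
  assumes "ideal I R" "T \<subseteq> carrier R"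
    and "\<And>x. x \<in> carrier R \<Longrightarrow> \<exists>p\<in>T. x \<ominus>\<^bsub>R\<^esub> p \<in> I"
    and "\<And>p q. p \<in> T \<Longrightarrow> q \<in> T \<Longrightarrow> p \<ominus>\<^bsub>R\<^esub> q \<in> I \<Longrightarrow> p = q"
  shows "bij_betw (\<lambda>p. I +>\<^bsub>R\<^esub> p) T (carrier (R Quot I))"
proof (rule bij_betw_imageI)
  note eq_iff = ideal_a_rcos_eq_iff[OF assms(1)]
  show "inj_on (\<lambda>p. I +>\<^bsub>R\<^esub> p) T"
  proof (rule inj_onI)
    fix p q assume "p \<in> T" "q \<in> T" "I +>\<^bsub>R\<^esub> p = I +>\<^bsub>R\<^esub> q"
    moreover from this have "p \<in> carrier R" "q \<in> carrier R"
      using assms(2) by auto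
    ultimately show "p = q"
      using assms(4) eq_iff by blast
  qed
  have "I +>\<^bsub>R\<^esub> x \<in> (\<lambda>p. I +>\<^bsub>R\<^esub> p) ` T" if "x \<in> carrier R" for x
    using assms(2) assms(3)[OF that] eq_iff that by blast
  then show "(\<lambda>p. I +>\<^bsub>R\<^esub> p) ` T = carrier (R Quot I)"
    using assms(2) by (auto simp: FactRing_def A_RCOSETS_def')
qed

lemma int_set_eq_multiples:
  fixes S :: "int set"
  assumes "a \<in> S" "a \<noteq> 0"
    and add: "\<And>x y. x \<in> S \<Longrightarrow> y \<in> S \<Longrightarrow> x + y \<in> S"
    and smult: "\<And>c x. x \<in> S \<Longrightarrow> c * x \<in> S"
  shows "\<exists>d>0. S = {x. d dvd x}"
proof -
  define P where "P n \<longleftrightarrow> 0 < n \<and> int n \<in> S" for n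
  define d where "d = int (LEAST n. P n)"
  have "\<bar>a\<bar> \<in> S"
    using smult[OF assms(1), of "sgn a"] by (simp add: abs_sgn mult.commute)
  then have "P (nat \<bar>a\<bar>)"
    using assms(2) by (simp add: P_def)
  then have "P (LEAST n. P n)"
    by (rule LeastI)
  then have d: "0 < d" "d \<in> S"
    by (simp_all add: P_def d_def)
  have "d dvd x" if "x \<in> S" for x
  proof -
    have "x mod d = x + (- (x div d)) * d"
      by (simp add: minus_div_mult_eq_mod[symmetric])
    then have "x mod d \<in> S"
      using add[OF that smult[OF d(2), of "- (x div d)"]] by simp
    moreover have "0 \<le> x mod d" "x mod d < d"
      using d(1) by simp_all
    ultimately have "\<not> 0 < x mod d"
      using not_less_Least[of "nat (x mod d)" P] by (auto simp: P_def d_def)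
    with \<open>0 \<le> x mod d\<close> show "d dvd x"
      by (simp add: dvd_eq_mod_eq_0)
  qed
  moreover have "x \<in> S" if "d dvd x" for x
    using that smult[OF d(2)] by (auto simp: mult.commute)
  ultimately show ?thesis
    using d(1) by blast
qed

section \<open>Ideals of finite index in \<open>\<int>[X]/(X\<^sup>2)\<close>\<close>

lemma carrier_ZX_mod_X2 [simp]: "carrier ZX_mod_X2 = UNIV"
  by (simp add: ZX_mod_X2_def)

lemma add_ZX_mod_X2 [simp]: "x \<oplus>\<^bsub>ZX_mod_X2\<^esub> y = x + y"
  by (cases x; cases y) (simp add: ZX_mod_X2_def)

lemma mult_ZX_mod_X2 [simp]:
  "x \<otimes>\<^bsub>ZX_mod_X2\<^esub> y = (fst x * fst y, fst x * snd y + snd x * fst y)"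
  by (cases x; cases y) (simp add: ZX_mod_X2_def)

lemma zero_ZX_mod_X2 [simp]: "\<zero>\<^bsub>ZX_mod_X2\<^esub> = 0"
  by (simp add: ZX_mod_X2_def zero_prod_def)

lemma one_ZX_mod_X2 [simp]: "\<one>\<^bsub>ZX_mod_X2\<^esub> = (1, 0)"
  by (simp add: ZX_mod_X2_def)

lemma cring_ZX_mod_X2: "cring ZX_mod_X2"
proof (rule cringI)
  show "abelian_group ZX_mod_X2"
  proof (rule abelian_groupI)
    show "\<exists>y\<in>carrier ZX_mod_X2. y \<oplus>\<^bsub>ZX_mod_X2\<^esub> x = \<zero>\<^bsub>ZX_mod_X2\<^esub>" for x :: "int \<times> int"
      by (rule bexI[of _ "- x"]) auto
  qed (auto simp: algebra_simps)
  show "comm_monoid ZX_mod_X2"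
    by (rule comm_monoidI) (auto simp: algebra_simps)
qed (auto simp: algebra_simps)

lemma a_inv_ZX_mod_X2 [simp]: "\<ominus>\<^bsub>ZX_mod_X2\<^esub> x = - x"
proof -
  interpret cring ZX_mod_X2 by (rule cring_ZX_mod_X2)
  show ?thesis by (rule minus_equality) auto
qed

lemma a_minus_ZX_mod_X2 [simp]: "x \<ominus>\<^bsub>ZX_mod_X2\<^esub> y = x - y"
  by (simp add: a_minus_def)

lemma ideal_ZX_mod_X2_iff:
  "ideal I ZX_mod_X2 \<longleftrightarrow>
     0 \<in> I \<and> (\<forall>x\<in>I. \<forall>y\<in>I. x + y \<in> I) \<and> (\<forall>x\<in>I. \<forall>c e. (c * fst x, c * snd x + e * fst x) \<in> I)"
proof
  assume "ideal I ZX_mod_X2"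
  then interpret ideal I ZX_mod_X2 .
  have "0 \<in> I" using additive_subgroup.zero_closed[OF additive_subgroup_axioms] by simp
  moreover have "x + y \<in> I" if "x \<in> I" "y \<in> I" for x y
    using additive_subgroup.a_closed[OF additive_subgroup_axioms that] by simp
  moreover have "(c, e) \<otimes>\<^bsub>ZX_mod_X2\<^esub> x \<in> I" if "x \<in> I" for x c e
    using that by (intro I_l_closed) auto
  ultimately show "0 \<in> I \<and> (\<forall>x\<in>I. \<forall>y\<in>I. x + y \<in> I) \<and> (\<forall>x\<in>I. \<forall>c e. (c * fst x, c * snd x + e * fst x) \<in> I)"
    by (auto simp: mult.commute)
next
  assume "0 \<in> I \<and> (\<forall>x\<in>I. \<forall>y\<in>I. x + y \<in> I) \<and> (\<forall>x\<in>I. \<forall>c e. (c * fst x, c * snd x + e * fst x) \<in> I)"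
  then have zero: "0 \<in> I" and add: "\<And>x y. x \<in> I \<Longrightarrow> y \<in> I \<Longrightarrow> x + y \<in> I"
    and smult: "\<And>x c e. x \<in> I \<Longrightarrow> (c * fst x, c * snd x + e * fst x) \<in> I"
    by blast+
  have neg: "- x \<in> I" if "x \<in> I" for x
    using smult[OF that, of "-1" 0] by (cases x) simp
  show "ideal I ZX_mod_X2"
  proof (rule idealI)
    show "ring ZX_mod_X2"
      using cring_ZX_mod_X2 by (rule cring.axioms(1))
    show "subgroup I (add_monoid ZX_mod_X2)"
    proof
      show "inv\<^bsub>add_monoid ZX_mod_X2\<^esub> x \<in> I" if "x \<in> I" for x
        using neg[OF that] a_inv_ZX_mod_X2[of x] by (simp add: a_inv_def)
    qed (use zero add in auto)
    show "x \<otimes>\<^bsub>ZX_mod_X2\<^esub> a \<in> I" and "a \<otimes>\<^bsub>ZX_mod_X2\<^esub> x \<in> I" if "a \<in> I" for a x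
      using smult[OF that, of "fst x" "snd x"] by (simp_all add: mult.commute add.commute)
  qed
qed

text \<open>The ideal \<open>(jk + tX, kX)\<close>; as a group it is spanned by its two generators.\<close>

definition lattice_ideal :: "nat \<Rightarrow> nat \<Rightarrow> nat \<Rightarrow> (int \<times> int) set" where
  "lattice_ideal k j t = {(q * int (j * k), q * int t + r * int k) | q r. True}"

lemma mem_lattice_ideal_iff:
  assumes "0 < k" "0 < j"
  shows "(a, b) \<in> lattice_ideal k j t \<longleftrightarrow>
           int (j * k) dvd a \<and> int k dvd b - a div int (j * k) * int t"
proof
  assume "(a, b) \<in> lattice_ideal k j t"
  then obtain q r where "a = q * int (j * k)" "b = q * int t + r * int k"
    by (auto simp: lattice_ideal_def)
  then show "int (j * k) dvd a \<and> int k dvd b - a div int (j * k) * int t"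
    using assms by simp
next
  assume "int (j * k) dvd a \<and> int k dvd b - a div int (j * k) * int t"
  then obtain q r where q: "a = int (j * k) * q" and r: "b - a div int (j * k) * int t = int k * r"
    by (meson dvdE)
  have "a div int (j * k) = q"
    using q assms by simp
  then have "(a, b) = (q * int (j * k), q * int t + r * int k)"
    using q r by (simp add: algebra_simps)
  then show "(a, b) \<in> lattice_ideal k j t"
    unfolding lattice_ideal_def by blast
qed

lemma ideal_lattice_ideal: "ideal (lattice_ideal k j t) ZX_mod_X2"
  unfolding ideal_ZX_mod_X2_iff
proof (intro conjI ballI allI)
  show "0 \<in> lattice_ideal k j t"
    unfolding lattice_ideal_def zero_prod_def by force
next
  fix x y assume "x \<in> lattice_ideal k j t" "y \<in> lattice_ideal k j t"
  then obtain q r q' r' where "x = (q * int (j * k), q * int t + r * int k)"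
    and "y = (q' * int (j * k), q' * int t + r' * int k)"
    by (auto simp: lattice_ideal_def)
  then have "x + y = ((q + q') * int (j * k), (q + q') * int t + (r + r') * int k)"
    by (simp add: algebra_simps)
  then show "x + y \<in> lattice_ideal k j t"
    unfolding lattice_ideal_def by blast
next
  fix x c e assume "x \<in> lattice_ideal k j t"
  then obtain q r where "x = (q * int (j * k), q * int t + r * int k)"
    by (auto simp: lattice_ideal_def)
  then have "(c * fst x, c * snd x + e * fst x) =
      ((c * q) * int (j * k), (c * q) * int t + (c * r + e * q * int j) * int k)"
    by (simp add: algebra_simps)
  then show "(c * fst x, c * snd x + e * fst x) \<in> lattice_ideal k j t"
    unfolding lattice_ideal_def by blast
qed

lemma lattice_ideal_representative:
  assumes "0 < k" "0 < j"
  shows "\<exists>p \<in> {0..<int (j * k)} \<times> {0..<int k}. x - p \<in> lattice_ideal k j t"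
proof -
  define m where "m = int (j * k)"
  obtain a b where x: "x = (a, b)" by (cases x)
  define q where "q = a div m"
  define p where "p = (a mod m, (b - q * int t) mod int k)"
  have "a - a mod m = m * q"
    by (simp add: q_def minus_mod_eq_mult_div)
  moreover have "b - (b - q * int t) mod int k - q * int t = int k * ((b - q * int t) div int k)"
    using minus_mod_eq_mult_div[of "b - q * int t" "int k"] by simp
  ultimately have "x - p \<in> lattice_ideal k j t"
    using assms by (simp add: x p_def mem_lattice_ideal_iff m_def)
  moreover have "p \<in> {0..<m} \<times> {0..<int k}"
    using assms by (simp add: p_def m_def)
  ultimately show ?thesis
    unfolding m_def by blast
qed

lemma lattice_ideal_representative_unique:
  assumes "0 < k" "0 < j"
    and "p \<in> {0..<int (j * k)} \<times> {0..<int k}" "p' \<in> {0..<int (j * k)} \<times> {0..<int k}"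
    and "p - p' \<in> lattice_ideal k j t"
  shows "p = p'"
proof -
  define m where "m = int (j * k)"
  obtain a b a' b' where p: "p = (a, b)" "p' = (a', b')" by (cases p, cases p')
  have "m dvd a - a'" and dvd_b: "int k dvd b - b' - (a - a') div m * int t"
    using assms(5) by (simp_all add: p mem_lattice_ideal_iff[OF assms(1,2)] m_def)
  then have "a mod m = a' mod m"
    by (simp add: mod_eq_dvd_iff)
  then have "a = a'"
    using assms(3,4) by (simp add: p m_def)
  then have "b mod int k = b' mod int k"
    using dvd_b by (simp add: mod_eq_dvd_iff)
  then have "b = b'"
    using assms(3,4) by (simp add: p)
  with \<open>a = a'\<close> show "p = p'"
    by (simp add: p)
qed

lemma card_quotient_lattice_ideal:
  assumes "0 < k" "0 < j"
  shows "card (carrier (ZX_mod_X2 Quot lattice_ideal k j t)) = j * k * k"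
proof -
  have "bij_betw (\<lambda>p. lattice_ideal k j t +>\<^bsub>ZX_mod_X2\<^esub> p) ({0..<int (j * k)} \<times> {0..<int k})
          (carrier (ZX_mod_X2 Quot lattice_ideal k j t))"
    using lattice_ideal_representative[OF assms] lattice_ideal_representative_unique[OF assms]
    by (intro ideal_bij_betw_transversal_quotient ideal_lattice_ideal) auto
  then have "card (carrier (ZX_mod_X2 Quot lattice_ideal k j t)) = card ({0..<int (j * k)} \<times> {0..<int k})"
    by (simp add: bij_betw_same_card)
  also have "\<dots> = j * k * k"
    by (simp add: nat_mult_distrib)
  finally show ?thesis .
qed

lemma finite_index_ideal_ZX_mod_X2_contains_int:
  assumes "ideal I ZX_mod_X2" "finite (carrier (ZX_mod_X2 Quot I))"
  obtains a where "a \<noteq> 0" "(a, 0) \<in> I"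
proof -
  define f where "f i = I +>\<^bsub>ZX_mod_X2\<^esub> (int i, 0)" for i :: nat
  have "range f \<subseteq> carrier (ZX_mod_X2 Quot I)"
    by (auto simp: f_def FactRing_def A_RCOSETS_def')
  then have "\<not> inj f"
    using assms(2) finite_subset finite_imageD infinite_UNIV_nat by metis
  then obtain i i' where "i \<noteq> i'" "f i = f i'"
    by (auto simp: inj_def)
  then have "(int i - int i', 0) \<in> I"
    using ideal_a_rcos_eq_iff[OF assms(1), of "(int i, 0)" "(int i', 0)"] by (simp add: f_def)
  then show ?thesis
    using that[of "int i - int i'"] \<open>i \<noteq> i'\<close> by simp
qed

lemma ideal_ZX_mod_X2_closed:
  assumes "ideal I ZX_mod_X2" "x \<in> I" "y \<in> I"
  shows "x + y \<in> I" and "x - y \<in> I"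
proof -
  have add: "\<And>x y. x \<in> I \<Longrightarrow> y \<in> I \<Longrightarrow> x + y \<in> I"
    and smult: "\<And>x c e. x \<in> I \<Longrightarrow> (c * fst x, c * snd x + e * fst x) \<in> I"
    using assms(1) unfolding ideal_ZX_mod_X2_iff by blast+
  show "x + y \<in> I"
    using add assms(2,3) .
  show "x - y \<in> I"
    using add[OF assms(2) smult[OF assms(3), of "-1" 0]] by (cases x; cases y) simp
qed

lemma ideal_ZX_mod_X2_smult:
  assumes "ideal I ZX_mod_X2" "x \<in> I"
  shows "(c * fst x, c * snd x) \<in> I" and "(0, fst x) \<in> I"
proof -
  have "(c * fst x, c * snd x + e * fst x) \<in> I" for c e
    using assms unfolding ideal_ZX_mod_X2_iff by blast
  from this[of c 0] this[of 0 1] show "(c * fst x, c * snd x) \<in> I" "(0, fst x) \<in> I"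
    by simp_all
qed

lemma lattice_ideal_eqI:
  assumes I: "ideal I ZX_mod_X2" and gen: "(int (j * k), int t) \<in> I"
    and X_multiples: "\<And>b. (0, b) \<in> I \<longleftrightarrow> int k dvd b"
    and constant_coeffs: "\<And>a b. (a, b) \<in> I \<Longrightarrow> int (j * k) dvd a"
  shows "I = lattice_ideal k j t"
proof (intro equalityI subsetI)
  fix x assume "x \<in> I"
  obtain a b where x: "x = (a, b)" by (cases x)
  obtain q where q: "a = q * int (j * k)"
    using constant_coeffs \<open>x \<in> I\<close> x by (metis dvd_def mult.commute)
  have "x - (q * int (j * k), q * int t) \<in> I"
    using ideal_ZX_mod_X2_closed(2)[OF I \<open>x \<in> I\<close> ideal_ZX_mod_X2_smult(1)[OF I gen]] by simp
  then have "int k dvd b - q * int t"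
    using X_multiples q by (simp add: x)
  then obtain r where "b - q * int t = r * int k"
    by (metis dvd_def mult.commute)
  then have "x = (q * int (j * k), q * int t + r * int k)"
    using q by (simp add: x algebra_simps)
  then show "x \<in> lattice_ideal k j t"
    unfolding lattice_ideal_def by blast
next
  fix x assume "x \<in> lattice_ideal k j t"
  then obtain q r where x: "x = (q * int (j * k), q * int t + r * int k)"
    by (auto simp: lattice_ideal_def)
  have "(0, r * int k) \<in> I"
    using X_multiples by simp
  from ideal_ZX_mod_X2_closed(1)[OF I ideal_ZX_mod_X2_smult(1)[OF I gen] this] show "x \<in> I"
    by (simp add: x)
qed

lemma ideal_ZX_mod_X2_eq_lattice_ideal:
  assumes I: "ideal I ZX_mod_X2" and "(a, 0) \<in> I" "a \<noteq> 0"
  obtains k j t where "0 < k" "0 < j" "t < k" "I = lattice_ideal k j t"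
proof -
  note closed = ideal_ZX_mod_X2_closed[OF I] and smult = ideal_ZX_mod_X2_smult[OF I]
  have "\<exists>d>0. {b. (0, b) \<in> I} = {b. d dvd b}"
  proof (rule int_set_eq_multiples)
    show "a \<in> {b. (0, b) \<in> I}"
      using smult(2)[OF assms(2)] by simp
    show "x + y \<in> {b. (0, b) \<in> I}" if "x \<in> {b. (0, b) \<in> I}" "y \<in> {b. (0, b) \<in> I}" for x y
      using closed(1)[of "(0, x)" "(0, y)"] that by simp
    show "c * x \<in> {b. (0, b) \<in> I}" if "x \<in> {b. (0, b) \<in> I}" for c x
      using smult(1)[of "(0, x)" c] that by simp
  qed (rule assms(3))
  then obtain d where d: "0 < d" "\<And>b. (0, b) \<in> I \<longleftrightarrow> d dvd b"
    by blast
  have "\<exists>m>0. {a. \<exists>b. (a, b) \<in> I} = {a. m dvd a}"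
  proof (rule int_set_eq_multiples)
    show "a \<in> {a. \<exists>b. (a, b) \<in> I}"
      using assms(2) by blast
    show "x + y \<in> {a. \<exists>b. (a, b) \<in> I}" if "x \<in> {a. \<exists>b. (a, b) \<in> I}" "y \<in> {a. \<exists>b. (a, b) \<in> I}" for x y
    proof -
      from that obtain b b' where "(x, b) \<in> I" "(y, b') \<in> I"
        by blast
      from closed(1)[OF this] show ?thesis
        by auto
    qed
    show "c * x \<in> {a. \<exists>b. (a, b) \<in> I}" if "x \<in> {a. \<exists>b. (a, b) \<in> I}" for c x
    proof -
      from that obtain b where "(x, b) \<in> I"
        by blast
      from smult(1)[OF this, of c] show ?thesis
        by auto
    qed
  qed (rule assms(3))
  then obtain m where m: "0 < m" "\<And>a. (\<exists>b. (a, b) \<in> I) \<longleftrightarrow> m dvd a"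
    by blast
  obtain b0 where b0: "(m, b0) \<in> I"
    using m(2)[of m] by auto
  obtain k where k: "d = int k" "0 < k"
    using d(1) pos_int_cases by blast
  have "d dvd m"
    using smult(2)[OF b0] d(2) by simp
  then obtain c where c: "m = d * c"
    by (rule dvdE)
  with d(1) m(1) have "0 < c"
    by (simp add: zero_less_mult_iff)
  then obtain j where "c = int j" "0 < j"
    using pos_int_cases by blast
  with c k have j: "m = int (j * k)" "0 < j"
    by simp_all
  define t where "t = nat (b0 mod d)"
  have "(m, b0) - (0, b0 div d * d) \<in> I"
    using closed(2)[OF b0, of "(0, b0 div d * d)"] d(2)[of "b0 div d * d"] by simp
  then have "(int (j * k), int t) \<in> I"
    using d(1) j(1) by (simp add: t_def minus_div_mult_eq_mod)
  then have "I = lattice_ideal k j t"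
    using d(2) m(2) j(1) k(1) by (intro lattice_ideal_eqI[OF I]) auto
  moreover have "t < k"
    using d(1) k by (simp add: t_def nat_less_iff)
  ultimately show ?thesis
    using that k(2) j(2) by blast
qed

lemma lattice_ideal_eq_iff:
  assumes "0 < k" "0 < j" "t < k" "0 < k'" "0 < j'" "t' < k'"
  shows "lattice_ideal k j t = lattice_ideal k' j' t' \<longleftrightarrow> k = k' \<and> j = j' \<and> t = t'"
proof
  assume eq: "lattice_ideal k j t = lattice_ideal k' j' t'"
  have gens: "(int (j * k), int t) \<in> lattice_ideal k j t" "(0, int k) \<in> lattice_ideal k j t"
    and gens': "(int (j' * k'), int t') \<in> lattice_ideal k' j' t'" "(0, int k') \<in> lattice_ideal k' j' t'"
    using assms by (simp_all add: mem_lattice_ideal_iff)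
  have in': "(int (j * k), int t) \<in> lattice_ideal k' j' t'" "(0, int k) \<in> lattice_ideal k' j' t'"
    using gens by (simp_all only: eq)
  have "(int (j' * k'), int t') \<in> lattice_ideal k j t" "(0, int k') \<in> lattice_ideal k j t"
    using gens' by (simp_all only: eq)
  then have "j' * k' dvd j * k" "j * k dvd j' * k'" "k' dvd k" "k dvd k'"
    using in' assms by (simp_all add: mem_lattice_ideal_iff del: of_nat_mult)
  then have "k = k'" "j * k = j' * k'"
    by (simp_all add: dvd_antisym)
  with assms have "j = j'"
    by simp
  have "int k dvd int t - int t'"
    using in'(1) assms \<open>k = k'\<close> \<open>j = j'\<close> by (simp add: mem_lattice_ideal_iff)
  then have "t = t'"
    using assms \<open>k = k'\<close> by (simp add: mod_eq_dvd_iff[symmetric])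
  with \<open>k = k'\<close> \<open>j = j'\<close> show "k = k' \<and> j = j' \<and> t = t'"
    by simp
qed simp

definition square_factorizations :: "nat \<Rightarrow> (nat \<times> nat) set" where
  "square_factorizations n = {(k, j). j * k\<^sup>2 = n}"

lemma square_factorizations_pos:
  assumes "(k, j) \<in> square_factorizations n" "0 < n"
  shows "0 < k" "0 < j"
  using assms by (auto simp: square_factorizations_def)

lemma finite_square_factorizations:
  assumes "0 < n"
  shows "finite (square_factorizations n)"
proof (rule finite_subset)
  show "square_factorizations n \<subseteq> {..n} \<times> {..n}"
    using assms by (auto simp: square_factorizations_def intro!: dvd_imp_le)
qed simp

lemma ideals_of_index_ZX_mod_X2:
  assumes "0 < n"
  shows "{I. ideal I ZX_mod_X2 \<and> card (carrier (ZX_mod_X2 Quot I)) = n} =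
           (\<lambda>((k, j), t). lattice_ideal k j t) ` Sigma (square_factorizations n) (\<lambda>(k, j). {..<k})"
    (is "?ideals = ?lattices")
proof
  show "?ideals \<subseteq> ?lattices"
  proof
    fix I assume "I \<in> ?ideals"
    then have I: "ideal I ZX_mod_X2" and card: "card (carrier (ZX_mod_X2 Quot I)) = n"
      by auto
    then have "finite (carrier (ZX_mod_X2 Quot I))"
      using assms card.infinite by fastforce
    then obtain a where "a \<noteq> 0" "(a, 0) \<in> I"
      using finite_index_ideal_ZX_mod_X2_contains_int[OF I] by blast
    then obtain k j t where kjt: "0 < k" "0 < j" "t < k" "I = lattice_ideal k j t"
      using ideal_ZX_mod_X2_eq_lattice_ideal[OF I] by blast
    then have "(k, j) \<in> square_factorizations n"
      using card card_quotient_lattice_ideal[of k j t]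
      by (simp add: square_factorizations_def power2_eq_square mult.assoc)
    with kjt show "I \<in> ?lattices"
      by force
  qed
  show "?lattices \<subseteq> ?ideals"
  proof
    fix I assume "I \<in> ?lattices"
    then obtain k j t where "(k, j) \<in> square_factorizations n" "I = lattice_ideal k j t"
      by auto
    moreover from this have "0 < k" "0 < j"
      using square_factorizations_pos assms by blast+
    ultimately show "I \<in> ?ideals"
      using ideal_lattice_ideal card_quotient_lattice_ideal
      by (simp add: square_factorizations_def power2_eq_square mult.assoc)
  qed
qed

lemma inj_on_lattice_ideal:
  assumes "0 < n"
  shows "inj_on (\<lambda>((k, j), t). lattice_ideal k j t) (Sigma (square_factorizations n) (\<lambda>(k, j). {..<k}))"
proof (rule inj_onI)
  fix x y
  assume "x \<in> Sigma (square_factorizations n) (\<lambda>(k, j). {..<k})"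
    and "y \<in> Sigma (square_factorizations n) (\<lambda>(k, j). {..<k})"
    and eq: "(\<lambda>((k, j), t). lattice_ideal k j t) x = (\<lambda>((k, j), t). lattice_ideal k j t) y"
  then obtain k j t k' j' t' where xy: "x = ((k, j), t)" "y = ((k', j'), t')"
    and kj: "(k, j) \<in> square_factorizations n" "t < k"
    and kj': "(k', j') \<in> square_factorizations n" "t' < k'"
    by auto
  have "k = k' \<and> j = j' \<and> t = t'"
    using eq xy kj kj' lattice_ideal_eq_iff
      square_factorizations_pos[OF kj(1) assms] square_factorizations_pos[OF kj'(1) assms]
    by simp
  then show "x = y"
    by (simp add: xy)
qed

lemma finite_ideals_of_index_ZX_mod_X2:
  assumes "0 < n"
  shows "finite {I. ideal I ZX_mod_X2 \<and> card (carrier (ZX_mod_X2 Quot I)) = n}"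
  unfolding ideals_of_index_ZX_mod_X2[OF assms]
  using finite_square_factorizations[OF assms] by auto

lemma num_ideals_of_index_ZX_mod_X2:
  assumes "0 < n"
  shows "num_ideals_of_index ZX_mod_X2 n = (\<Sum>(k, j)\<in>square_factorizations n. k)"
proof -
  have "num_ideals_of_index ZX_mod_X2 n = card (Sigma (square_factorizations n) (\<lambda>(k, j). {..<k}))"
    unfolding num_ideals_of_index_def ideals_of_index_ZX_mod_X2[OF assms]
    by (rule card_image[OF inj_on_lattice_ideal[OF assms]])
  also have "\<dots> = (\<Sum>(k, j)\<in>square_factorizations n. card {..<k})"
    by (subst card_SigmaI) (auto simp: finite_square_factorizations[OF assms] case_prod_unfold)
  finally show ?thesis
    by simp
qed

section \<open>The Dirichlet series\<close>

lemma has_sum_greaterThan_0_iff_Suc: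
  "(f has_sum S) {0<..} \<longleftrightarrow> ((\<lambda>n. f (Suc n)) has_sum S) UNIV"
  using has_sum_reindex[of Suc UNIV f S] by (simp add: greaterThan_0 o_def)

lemma of_nat_mult_powr: "(of_nat (m * n) :: complex) powr s = of_nat m powr s * of_nat n powr s"
  by (subst of_nat_mult, rule powr_times_real_left) auto

lemma has_sum_product:
  fixes f g :: "_ \<Rightarrow> 'a :: {real_normed_field, banach}"
  assumes "(f has_sum a) A" "(\<lambda>x. norm (f x)) summable_on A"
    and "(g has_sum b) B" "(\<lambda>y. norm (g y)) summable_on B"
  shows "((\<lambda>(x, y). f x * g y) has_sum a * b) (A \<times> B)"
proof -
  have "(\<lambda>z. norm (case z of (x, y) \<Rightarrow> f x * g y)) summable_on A \<times> B"
    unfolding Infinite_Sum.abs_summable_on_Sigma_iff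
    using assms(2,4)
    by (auto simp: norm_mult abs_mult infsum_cmult_right' intro: summable_on_cmult_left summable_on_cmult_right)
  then have summable: "(\<lambda>(x, y). f x * g y) summable_on A \<times> B"
    by (rule abs_summable_summable)
  show ?thesis
    by (rule has_sum_SigmaI[OF _ has_sum_cmult_left[OF assms(1)] summable])
      (simp add: has_sum_cmult_right[OF assms(3)])
qed

lemma summable_norm_riemann_zeta_series:
  assumes "Re s > 1"
  shows "summable (\<lambda>n. norm (1 / of_nat (Suc n) powr s :: complex))"
proof -
  have "norm (1 / of_nat (Suc n) powr s :: complex) = real (Suc n) powr (- Re s)" for n
    by (simp add: norm_divide norm_powr_real_powr powr_minus_divide)
  moreover have "summable (\<lambda>n. real (Suc n) powr (- Re s))"
    using summable_real_powr_iff[of "- Re s"] assms by (subst summable_Suc_iff) simp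
  ultimately show ?thesis
    by simp
qed

lemma riemann_zeta_sums:
  assumes "Re s > 1"
  shows "(\<lambda>n. 1 / of_nat (Suc n) powr s) sums riemann_zeta s"
  unfolding riemann_zeta_def
  using summable_norm_cancel[OF summable_norm_riemann_zeta_series[OF assms]] by (rule summable_sums)

lemma riemann_zeta_has_sum:
  assumes "Re s > 1"
  shows "((\<lambda>n. 1 / of_nat n powr s) has_sum riemann_zeta s) {0<..}"
    and "(\<lambda>n. norm (1 / of_nat n powr s :: complex)) summable_on {0<..}"
proof -
  note summable = summable_norm_riemann_zeta_series[OF assms]
  show "((\<lambda>n. 1 / of_nat n powr s) has_sum riemann_zeta s) {0<..}"
    unfolding has_sum_greaterThan_0_iff_Suc
    by (rule norm_summable_imp_has_sum[OF summable riemann_zeta_sums[OF assms]])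
  have "((\<lambda>n. norm (1 / of_nat (Suc n) powr s :: complex)) has_sum suminf (\<lambda>n. norm (1 / of_nat (Suc n) powr s :: complex))) UNIV"
    using summable by (intro norm_summable_imp_has_sum) (simp_all add: summable_sums)
  then show "(\<lambda>n. norm (1 / of_nat n powr s :: complex)) summable_on {0<..}"
    unfolding summable_on_def has_sum_greaterThan_0_iff_Suc by blast
qed

lemma riemann_zeta_product_has_sum:
  assumes "Re s > 1"
  shows "((\<lambda>n. of_nat (\<Sum>(k, j)\<in>square_factorizations n. k) / of_nat n powr s)
            has_sum riemann_zeta s * riemann_zeta (2 * s - 1)) {0<..}"
proof -
  have "Re (2 * s - 1) > 1"
    using assms by simp
  then have product: "((\<lambda>(k, j). 1 / of_nat k powr (2 * s - 1) * (1 / of_nat j powr s))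
              has_sum riemann_zeta s * riemann_zeta (2 * s - 1)) ({0<..} \<times> {0<..})"
    using assms by (subst mult.commute) (intro has_sum_product riemann_zeta_has_sum)
  have term_eq: "1 / of_nat k powr (2 * s - 1) * (1 / of_nat j powr s) = of_nat k / of_nat (j * k\<^sup>2) powr s"
    if "0 < k" "0 < j" for k j :: nat
  proof -
    define x y where "x = (of_nat k :: complex)" and "y = (of_nat j :: complex)"
    have nonzero: "x \<noteq> 0" "x powr s \<noteq> 0" "y powr s \<noteq> 0"
      using that by (simp_all add: x_def y_def)
    have product: "of_nat (j * k\<^sup>2) powr s = y powr s * (x powr s * x powr s)"
      by (simp only: x_def y_def power2_eq_square of_nat_mult_powr)
    have shifted: "x powr (2 * s - 1) = x powr s * x powr s / x"
      by (simp only: mult_2 powr_diff powr_add powr_to_1)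
    have "1 / (x powr s * x powr s / x) * (1 / y powr s) = x / (y powr s * (x powr s * x powr s))"
      using nonzero by (simp add: field_simps)
    then show ?thesis
      unfolding product x_def[symmetric] y_def[symmetric] shifted .
  qed
  from product have "((\<lambda>(k, j). of_nat k / of_nat (j * k\<^sup>2) powr s)
              has_sum riemann_zeta s * riemann_zeta (2 * s - 1)) ({0<..} \<times> {0<..})"
  proof (rule has_sum_cong[THEN iffD1, rotated])
    fix kj :: "nat \<times> nat" assume "kj \<in> {0<..} \<times> {0<..}"
    then obtain k j where "kj = (k, j)" "0 < k" "0 < j"
      by auto
    with term_eq[of k j] show "(\<lambda>(k, j). 1 / of_nat k powr (2 * s - 1) * (1 / of_nat j powr s)) kj =
        (\<lambda>(k, j). of_nat k / of_nat (j * k\<^sup>2) powr s) kj"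
      by simp
  qed
  moreover have "bij_betw snd (Sigma {0<..} square_factorizations) ({0<..} \<times> {0<..})"
    by (rule bij_betwI[where g = "\<lambda>(k, j). (j * k\<^sup>2, (k, j))"]) (auto simp: square_factorizations_def)
  ultimately have "((\<lambda>x. (\<lambda>(k, j). of_nat k / of_nat (j * k\<^sup>2) powr s) (snd x))
              has_sum riemann_zeta s * riemann_zeta (2 * s - 1)) (Sigma {0<..} square_factorizations)"
    using has_sum_reindex_bij_betw by blast
  then have "((\<lambda>(n, k, j). of_nat k / of_nat n powr s)
              has_sum riemann_zeta s * riemann_zeta (2 * s - 1)) (Sigma {0<..} square_factorizations)"
    by (rule has_sum_cong[THEN iffD1, rotated]) (auto simp: square_factorizations_def)
  then show ?thesis
    by (rule has_sum_Sigma')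
      (use finite_square_factorizations in \<open>auto intro!: has_sum_finiteI simp: sum_divide_distrib case_prod_unfold\<close>)
qed

section \<open>The double pole\<close>

lemma powr_step_taylor_bound:
  fixes s :: complex and x :: real
  assumes "0 < x" "-1 \<le> Re s"
  shows "norm (of_real (x + 1) powr (1 - s) - of_real x powr (1 - s) - (1 - s) * of_real x powr (- s))
           \<le> norm (1 - s) * norm s * x powr (- Re s - 1)"
proof -
  define S where "S = complex_of_real ` {x..x + 1}"
  define f where "f i = (if i = 0 then (\<lambda>z. z powr (1 - s))
                         else if i = 1 then (\<lambda>z. (1 - s) * z powr (- s))
                         else (\<lambda>z. (1 - s) * (- s * z powr (- s - 1))))" for i :: nat
  have deriv: "(f i has_field_derivative f (Suc i) z) (at z within S)" if "z \<in> S" "i \<le> 1" for i z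
  proof -
    have "z \<notin> \<real>\<^sub>\<le>\<^sub>0"
      using that(1) assms(1) by (auto simp: S_def nonpos_Reals_def)
    note powr_deriv = has_field_derivative_powr[OF this]
    have "((\<lambda>z. z powr (1 - s)) has_field_derivative (1 - s) * z powr (- s)) (at z)"
      using powr_deriv[of "1 - s"] by simp
    moreover have "((\<lambda>z. (1 - s) * z powr (- s)) has_field_derivative (1 - s) * (- s * z powr (- s - 1))) (at z)"
      using powr_deriv[of "- s"] by (rule DERIV_cmult)
    ultimately have "(f i has_field_derivative f (Suc i) z) (at z)"
      using that(2) by (cases i) (auto simp: f_def)
    then show ?thesis
      by (rule has_field_derivative_at_within)
  qed
  have bound: "norm (f (Suc 1) z) \<le> norm (1 - s) * norm s * x powr (- Re s - 1)" if z: "z \<in> S" for z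
  proof -
    obtain u where u: "z = of_real u" "u \<in> {x..x + 1}"
      using z unfolding S_def by (rule imageE)
    then have "norm (z powr (- s - 1)) = u powr (- Re s - 1)"
      using assms(1) by (subst norm_powr_real_powr) auto
    also have "\<dots> \<le> x powr (- Re s - 1)"
      using u assms by (intro powr_mono2') auto
    finally show ?thesis
      by (simp add: f_def norm_mult mult_left_mono mult.assoc)
  qed
  have "convex S"
    unfolding S_def by (intro convex_linear_image bounded_linear.linear[OF bounded_linear_of_real] convex_real_interval)
  moreover have "complex_of_real x \<in> S" "complex_of_real (x + 1) \<in> S"
    unfolding S_def by (rule imageI, simp)+
  ultimately have "norm (f 0 (of_real (x + 1)) - (\<Sum>i\<le>1. f i (of_real x) * (of_real (x + 1) - of_real x) ^ i / fact i))
                     \<le> norm (1 - s) * norm s * x powr (- Re s - 1) * norm (complex_of_real (x + 1) - of_real x) ^ Suc 1 / fact 1"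
    by (intro complex_Taylor[OF _ deriv bound])
  then show ?thesis
    by (simp add: f_def diff_diff_eq)
qed

lemma norm_riemann_zeta_pole_remainder_le:
  assumes "Re s > 1"
  shows "norm ((s - 1) * riemann_zeta s - 1) \<le> norm (s - 1) * norm s * (\<Sum>n. real (Suc n) powr (- 2))"
proof -
  define G where "G n = (of_nat (Suc n) :: complex) powr (1 - s)" for n
  have "G \<longlonglongrightarrow> 0"
    unfolding G_def using assms by (intro tendsto_neg_powr_complex_of_nat filterlim_Suc) auto
  then have "(\<lambda>n. G n - G (Suc n)) sums (G 0 - 0)"
    by (rule telescope_sums')
  moreover have "G 0 = 1"
    by (simp add: G_def)
  ultimately have telescope: "(\<lambda>n. G n - G (Suc n)) sums 1"
    by simp
  define d where "d n = (s - 1) * (1 / of_nat (Suc n) powr s) - (G n - G (Suc n))" for n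
  have d_sums: "d sums ((s - 1) * riemann_zeta s - 1)"
    unfolding d_def by (intro sums_diff sums_mult riemann_zeta_sums assms telescope)
  have d_bound: "norm (d n) \<le> norm (s - 1) * norm s * real (Suc n) powr (- 2)" for n
  proof -
    have "d n = of_real (real (Suc n) + 1) powr (1 - s) - of_real (real (Suc n)) powr (1 - s)
                 - (1 - s) * of_real (real (Suc n)) powr (- s)"
      by (simp add: d_def G_def powr_minus divide_inverse algebra_simps)
    then have "norm (d n) \<le> norm (1 - s) * norm s * real (Suc n) powr (- Re s - 1)"
      using powr_step_taylor_bound[of "real (Suc n)" s] assms by simp
    also have "\<dots> \<le> norm (1 - s) * norm s * real (Suc n) powr (- 2)"
      using assms by (intro mult_left_mono powr_mono) auto
    finally show ?thesis
      by (simp add: norm_minus_commute)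
  qed
  have summable: "summable (\<lambda>n. real (Suc n) powr (- 2))"
    using summable_real_powr_iff[of "- 2"] by (subst summable_Suc_iff) simp
  have "norm ((s - 1) * riemann_zeta s - 1) = norm (suminf d)"
    using sums_unique[OF d_sums] by simp
  also have "\<dots> \<le> (\<Sum>n. norm (s - 1) * norm s * real (Suc n) powr (- 2))"
    by (rule norm_suminf_le[OF d_bound summable_mult[OF summable]])
  also have "\<dots> = norm (s - 1) * norm s * (\<Sum>n. real (Suc n) powr (- 2))"
    by (rule suminf_mult[OF summable])
  finally show ?thesis .
qed

lemma tendsto_riemann_zeta_pole:
  "((\<lambda>s. (s - 1) * riemann_zeta s) \<longlongrightarrow> 1) (at 1 within {s. Re s > 1})"
proof (rule LIM_zero_cancel, rule Lim_null_comparison)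
  define C where "C = (\<Sum>n. real (Suc n) powr (- 2))"
  show "\<forall>\<^sub>F s in at 1 within {s. Re s > 1}. norm ((s - 1) * riemann_zeta s - 1) \<le> norm (s - 1) * norm s * C"
    unfolding C_def eventually_at_filter
    by (rule always_eventually) (blast intro: norm_riemann_zeta_pole_remainder_le)
  have "((\<lambda>s. norm (s - 1) * norm s * C) \<longlongrightarrow> norm ((1::complex) - 1) * norm (1::complex) * C)
          (at 1 within {s. Re s > 1})"
    by (intro tendsto_intros)
  then show "((\<lambda>s. norm (s - 1) * norm s * C) \<longlongrightarrow> 0) (at 1 within {s. Re s > 1})"
    by simp
qed

lemma tendsto_riemann_zeta_product_double_pole:
  "((\<lambda>s. (s - 1)\<^sup>2 * (riemann_zeta s * riemann_zeta (2 * s - 1))) \<longlongrightarrow> 1 / 2) (at 1 within {s. Re s > 1})"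
proof -
  let ?F = "at (1::complex) within {s. Re s > 1}"
  have "filterlim (\<lambda>s. 2 * s - 1) ?F ?F"
    unfolding filterlim_at eventually_at_filter
    by (auto intro!: always_eventually tendsto_eq_intros)
  then have "((\<lambda>s. ((2 * s - 1) - 1) * riemann_zeta (2 * s - 1)) \<longlongrightarrow> 1) ?F"
    by (rule filterlim_compose[OF tendsto_riemann_zeta_pole])
  then have "((\<lambda>s. 1 / 2 * ((s - 1) * riemann_zeta s) * (((2 * s - 1) - 1) * riemann_zeta (2 * s - 1)))
               \<longlongrightarrow> 1 / 2 * 1 * 1) ?F"
    by (intro tendsto_mult tendsto_const tendsto_riemann_zeta_pole)
  then show ?thesis
    by (simp add: power2_eq_square algebra_simps)
qed

theorem mainTheorem10:
  shows "(\<forall>n::nat. n \<ge> 1 \<longrightarrow>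
            finite {I. ideal I ZX_mod_X2 \<and> card (carrier (ZX_mod_X2 Quot I)) = n})
       \<and> (\<forall>s::complex. Re s > 1 \<longrightarrow>
            (\<lambda>n. of_nat (num_ideals_of_index ZX_mod_X2 (Suc n)) / (of_nat (Suc n)) powr s)
              sums (riemann_zeta s * riemann_zeta (2 * s - 1)))
       \<and> (\<exists>c::complex. c \<noteq> 0 \<and>
            ((\<lambda>s. (s - 1)\<^sup>2 * (riemann_zeta s * riemann_zeta (2 * s - 1)))
               \<longlongrightarrow> c) (at 1 within {s. Re s > 1}))"
proof (intro conjI allI impI)
  fix n :: nat assume "n \<ge> 1"
  then show "finite {I. ideal I ZX_mod_X2 \<and> card (carrier (ZX_mod_X2 Quot I)) = n}"
    by (intro finite_ideals_of_index_ZX_mod_X2) simp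
next
  fix s :: complex assume "Re s > 1"
  have "((\<lambda>n. of_nat (num_ideals_of_index ZX_mod_X2 n) / of_nat n powr s)
          has_sum riemann_zeta s * riemann_zeta (2 * s - 1)) {0<..}"
    by (rule has_sum_cong[THEN iffD1, OF _ riemann_zeta_product_has_sum[OF \<open>Re s > 1\<close>]])
      (simp add: num_ideals_of_index_ZX_mod_X2)
  then show "(\<lambda>n. of_nat (num_ideals_of_index ZX_mod_X2 (Suc n)) / of_nat (Suc n) powr s)
               sums (riemann_zeta s * riemann_zeta (2 * s - 1))"
    unfolding has_sum_greaterThan_0_iff_Suc by (rule has_sum_imp_sums)
next
  show "\<exists>c::complex. c \<noteq> 0 \<and>
          ((\<lambda>s. (s - 1)\<^sup>2 * (riemann_zeta s * riemann_zeta (2 * s - 1))) \<longlongrightarrow> c) (at 1 within {s. Re s > 1})"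
    using tendsto_riemann_zeta_product_double_pole by (intro exI[of _ "1 / 2"]) simp
qed

end
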